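(* Let $X$ be a finite set of distinct points in $\mathbb{R}^2$ such that no three points of $X$ are collinear. Fix distinct points $s, t \in X$. Then there exists a noncrossing Hamiltonian path through $X$ with endpoints $s$ and $t$.
   Context: Edges are straight line segments between points: for an edge $e=\{a,b\}$, $L(e)$ is the closed segment from $a$ to $b$. A path (set of edges) is noncrossing if no two of its edges have intersecting line segments (other than at a shared endpoint). *)

theory Defs
  imports "HOL-Analysis.Analysis"
begin

text \<open>A path through a point set is given by the list of its vertices in order;
  its edges are the consecutive pairs. L(e) is the closed segment.\<close>

definition hamiltonian_path :: "(real^2) set \<Rightarrow> (real^2) list \<Rightarrow> bool" where
  "hamiltonian_path X ps \<longleftrightarrow> distinct ps \<and> set ps = X"

definition noncrossing_path :: "(real^2) list \<Rightarrow> bool" where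
  "noncrossing_path ps \<longleftrightarrow>
     (\<forall>i j. i < j \<and> Suc j < length ps \<longrightarrow>
        closed_segment (ps!i) (ps!Suc i) \<inter> closed_segment (ps!j) (ps!Suc j)
          \<subseteq> {ps!i, ps!Suc i} \<inter> {ps!j, ps!Suc j})"

end

theory Submission
  imports Defs
begin

text \<open>By symmetry some point of X lies strictly left of the directed line st.
  Follow the ray from s through t beyond t. If it leaves the convex hull of X through a hull
  edge ab, with a left and b right of st, take noncrossing paths from s to a through the points
  left of st and from b to t through the points right of it: the line st separates the two
  halves, and no edge crosses the hull edge ab. Otherwise t is a hull vertex, and one of its hull
  neighbours u differs from s: take a path from s to u through X - {t} and append the hull edge
  ut. Both hull edges are found extremally, as the pair whose segment meets line st farthest
  beyond t, resp. the point left of st seen from t at the smallest angle to the ray.\<close>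

section \<open>Orientation and general position\<close>

text \<open>Positive iff q lies strictly to the left of the directed line from a to b.\<close>

definition orient :: "real^2 \<Rightarrow> real^2 \<Rightarrow> real^2 \<Rightarrow> real" where
  "orient a b q = (b - a)$1 * (q - a)$2 - (b - a)$2 * (q - a)$1"

lemma orient_commute: "orient b a q = - orient a b q"
  by (simp add: orient_def algebra_simps)

lemma orient_self [simp]: "orient a b a = 0" "orient a b b = 0"
  by (simp_all add: orient_def algebra_simps)

lemma orient_convex_combination:
  "orient a b ((1 - u) *\<^sub>R c + u *\<^sub>R d) = (1 - u) * orient a b c + u * orient a b d"
  by (simp add: orient_def algebra_simps)

lemma orient_closed_segment_pos:
  assumes "z \<in> closed_segment c d" "z \<noteq> c" "0 \<le> orient a b c" "0 < orient a b d"
  shows "0 < orient a b z"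
proof -
  obtain u where u: "0 \<le> u" "u \<le> 1" "z = (1 - u) *\<^sub>R c + u *\<^sub>R d"
    using assms(1) by (auto simp: in_segment)
  with assms(2) have "u \<noteq> 0" by auto
  with u assms(3,4) show ?thesis
    by (simp add: orient_convex_combination add_nonneg_pos)
qed

lemma orient_closed_segment_eq_0: "z \<in> closed_segment a b \<Longrightarrow> orient a b z = 0"
  by (auto simp: in_segment orient_convex_combination)

lemma collinear_if_orient_eq_0:
  assumes "orient a b c = 0"
  shows "collinear {a, b, c}"
proof -
  define v w where "v = b - a" and "w = c - a"
  have det: "v$1 * w$2 = v$2 * w$1"
    using assms by (simp add: orient_def v_def w_def)
  have "\<exists>k. w = k *\<^sub>R v" if "v \<noteq> 0"
  proof (cases "v$1 = 0")
    case True
    with that have "v$2 \<noteq> 0" by (metis exhaust_2 vec_eq_iff zero_index)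
    moreover have "w$1 = 0" using det True calculation by simp
    ultimately show ?thesis using True
      by (intro exI[of _ "w$2 / v$2"]) (simp add: vec_eq_iff forall_2)
  next
    case False
    then show ?thesis using det
      by (intro exI[of _ "w$1 / v$1"]) (simp add: vec_eq_iff forall_2 field_simps)
  qed
  then have "collinear {0, v, w}"
    by (auto simp: collinear_lemma)
  then have "collinear {b, a, c}"
    unfolding v_def w_def by (subst collinear_3) auto
  then show ?thesis
    by (simp add: insert_commute)
qed

definition general_position :: "(real^2) set \<Rightarrow> bool" where
  "general_position X \<longleftrightarrow>
     (\<forall>a\<in>X. \<forall>b\<in>X. \<forall>c\<in>X. a \<noteq> b \<and> a \<noteq> c \<and> b \<noteq> c \<longrightarrow> \<not> collinear {a, b, c})"

lemma general_position_subset: "general_position X \<Longrightarrow> Y \<subseteq> X \<Longrightarrow> general_position Y"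
  unfolding general_position_def by blast

lemma general_position_orient_eq_0:
  assumes "general_position X" "a \<in> X" "b \<in> X" "q \<in> X" "a \<noteq> b" "orient a b q = 0"
  shows "q = a \<or> q = b"
proof (rule ccontr)
  assume "\<not> (q = a \<or> q = b)"
  with assms(1-5) have "\<not> collinear {a, b, q}"
    unfolding general_position_def by auto
  with collinear_if_orient_eq_0[OF assms(6)] show False
    by contradiction
qed

section \<open>Hull edges and noncrossing edges\<close>

definition noncrossing_edges :: "((real^2) \<times> (real^2)) \<Rightarrow> ((real^2) \<times> (real^2)) \<Rightarrow> bool" where
  "noncrossing_edges e f \<longleftrightarrow>
     closed_segment (fst e) (snd e) \<inter> closed_segment (fst f) (snd f)
       \<subseteq> {fst e, snd e} \<inter> {fst f, snd f}"

lemma noncrossing_edges_commute: "noncrossing_edges e f \<longleftrightarrow> noncrossing_edges f e"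
  unfolding noncrossing_edges_def by blast

lemma noncrossing_edges_swap: "noncrossing_edges (prod.swap e) f \<longleftrightarrow> noncrossing_edges e f"
  unfolding noncrossing_edges_def by (simp add: closed_segment_commute insert_commute)

definition hull_edge :: "(real^2) set \<Rightarrow> real^2 \<Rightarrow> real^2 \<Rightarrow> bool" where
  "hull_edge X a b \<longleftrightarrow> a \<in> X \<and> b \<in> X \<and> a \<noteq> b \<and> (\<forall>q\<in>X - {a, b}. 0 < orient a b q)"

lemma hull_edgeI:
  assumes "general_position X" "a \<in> X" "b \<in> X" "a \<noteq> b" "\<And>q. q \<in> X \<Longrightarrow> 0 \<le> orient a b q"
  shows "hull_edge X a b"
proof -
  have "0 < orient a b q" if "q \<in> X - {a, b}" for q
  proof -
    have "orient a b q \<noteq> 0"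
      using general_position_orient_eq_0[OF assms(1-3) _ assms(4)] that by blast
    with assms(5) that show ?thesis
      by (simp add: order_less_le)
  qed
  with assms(2-4) show ?thesis
    unfolding hull_edge_def by blast
qed

lemma hull_edge_noncrossing:
  assumes "hull_edge X a b" "c \<in> X" "d \<in> X" "c \<noteq> d" "{c, d} \<noteq> {a, b}"
  shows "noncrossing_edges (a, b) (c, d)"
proof -
  have left: "0 < orient a b q" if "q \<in> X - {a, b}" for q
    using assms(1) that unfolding hull_edge_def by blast
  have meet: "z = p \<and> p \<in> {a, b}"
    if z: "z \<in> closed_segment a b" "z \<in> closed_segment p r" and "p \<in> X" "r \<in> X - {a, b}"
    for p r z
  proof -
    have "0 \<le> orient a b p"
      using left[of p] \<open>p \<in> X\<close> by (cases "p \<in> {a, b}") auto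
    then have "z = p"
      using orient_closed_segment_pos[OF z(2) _ _ left[OF \<open>r \<in> X - {a, b}\<close>]]
        orient_closed_segment_eq_0[OF z(1)] by fastforce
    with z(1) \<open>p \<in> X\<close> show ?thesis
      using left[of p] orient_closed_segment_eq_0 by fastforce
  qed
  have "c \<notin> {a, b} \<or> d \<notin> {a, b}"
    using assms(4,5) by auto
  then show ?thesis
    unfolding noncrossing_edges_def
    using meet[of _ c d] meet[of _ d c] assms(2,3) by (auto simp: closed_segment_commute)
qed

definition left_side :: "real^2 \<Rightarrow> real^2 \<Rightarrow> (real^2) set" where
  "left_side s t = {q. q = s \<or> 0 < orient s t q}"

lemma closed_segment_subset_left_side:
  assumes "c \<in> left_side s t" "d \<in> left_side s t"
  shows "closed_segment c d \<subseteq> left_side s t"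
proof
  fix z assume z: "z \<in> closed_segment c d"
  have segment_left: "z \<in> left_side s t"
    if "z \<in> closed_segment p r" "p \<in> left_side s t" "0 < orient s t r" for p r
    using orient_closed_segment_pos[OF that(1)] that(2,3) by (force simp: left_side_def)
  consider "c = s" "d = s" | "0 < orient s t d" | "0 < orient s t c"
    using assms by (auto simp: left_side_def)
  then show "z \<in> left_side s t"
  proof cases
    case 1
    with z show ?thesis by (simp add: left_side_def)
  next
    case 2
    with z assms(1) show ?thesis by (rule segment_left)
  next
    case 3
    with z assms(2) show ?thesis by (intro segment_left[of d c]) (auto simp: closed_segment_commute)
  qed
qed

lemma left_side_disjoint: "s \<noteq> t \<Longrightarrow> left_side s t \<inter> left_side t s = {}"
  by (auto simp: left_side_def orient_commute[of t s])

lemma general_position_left_sides: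
  assumes "general_position X" "s \<in> X" "t \<in> X" "s \<noteq> t"
  shows "X \<inter> left_side s t \<union> X \<inter> left_side t s = X"
proof -
  have "q \<in> left_side s t \<union> left_side t s" if "q \<in> X" for q
  proof -
    have "q = s \<or> q = t \<or> orient s t q \<noteq> 0"
      using general_position_orient_eq_0[OF assms(1-3) that assms(4)] by blast
    then show ?thesis
      by (auto simp: left_side_def orient_commute[of t s])
  qed
  then show ?thesis
    by blast
qed

definition edges :: "'a list \<Rightarrow> ('a \<times> 'a) list" where
  "edges ps = zip ps (tl ps)"

lemma edges_Cons: "xs \<noteq> [] \<Longrightarrow> edges (x # xs) = (x, hd xs) # edges xs"
  by (cases xs) (auto simp: edges_def)

lemma edges_single [simp]: "edges [x] = []"
  by (simp add: edges_def)

lemma edges_append: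
  "xs \<noteq> [] \<Longrightarrow> ys \<noteq> [] \<Longrightarrow> edges (xs @ ys) = edges xs @ (last xs, hd ys) # edges ys"
  by (induction xs rule: induct_list012) (auto simp: edges_def neq_Nil_conv)

lemma edges_rev: "edges (rev ps) = rev (map prod.swap (edges ps))"
proof (induction ps rule: rev_induct)
  case (snoc x xs)
  then show ?case
    by (cases "xs = []") (auto simp: edges_Cons edges_append hd_rev)
qed (simp add: edges_def)

lemma edges_distinct_vertices:
  assumes "(c, d) \<in> set (edges ps)" "distinct ps"
  shows "c \<in> set ps" "d \<in> set ps" "c \<noteq> d"
proof -
  obtain i where "i < length ps - 1" "c = ps ! i" "d = tl ps ! i"
    using assms(1) unfolding edges_def in_set_zip by auto
  with assms(2) show "c \<in> set ps" "d \<in> set ps" "c \<noteq> d"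
    by (auto simp: nth_tl nth_eq_iff_index_eq)
qed

lemma noncrossing_path_iff_edges: "noncrossing_path ps \<longleftrightarrow> sorted_wrt noncrossing_edges (edges ps)"
proof -
  have "edges ps ! i = (ps ! i, ps ! Suc i)" if "Suc i < length ps" for i
    using that by (simp add: edges_def nth_tl)
  then have "(\<forall>i j. i < j \<and> Suc j < length ps \<longrightarrow>
        noncrossing_edges (ps ! i, ps ! Suc i) (ps ! j, ps ! Suc j)) \<longleftrightarrow>
      (\<forall>i j. i < j \<longrightarrow> j < length (edges ps) \<longrightarrow> noncrossing_edges (edges ps ! i) (edges ps ! j))"
    by (auto simp: edges_def)
  then show ?thesis
    unfolding noncrossing_path_def sorted_wrt_iff_nth_less by (simp add: noncrossing_edges_def)
qed

definition noncrossing_ham_path :: "(real^2) set \<Rightarrow> real^2 \<Rightarrow> real^2 \<Rightarrow> (real^2) list \<Rightarrow> bool"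
  where "noncrossing_ham_path X s t ps \<longleftrightarrow>
    ps \<noteq> [] \<and> hd ps = s \<and> last ps = t \<and> hamiltonian_path X ps \<and> noncrossing_path ps"

lemma noncrossing_ham_path_single: "noncrossing_ham_path {t} t t [t]"
  by (simp add: noncrossing_ham_path_def hamiltonian_path_def noncrossing_path_iff_edges)

lemma noncrossing_ham_path_two: "s \<noteq> t \<Longrightarrow> noncrossing_ham_path {s, t} s t [s, t]"
  by (simp add: noncrossing_ham_path_def hamiltonian_path_def noncrossing_path_iff_edges edges_def)

lemma noncrossing_ham_path_rev:
  assumes "noncrossing_ham_path X s t ps"
  shows "noncrossing_ham_path X t s (rev ps)"
proof -
  have "sorted_wrt noncrossing_edges (edges ps)"
    using assms by (simp add: noncrossing_ham_path_def noncrossing_path_iff_edges)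
  then have "sorted_wrt noncrossing_edges (edges (rev ps))"
    unfolding edges_rev sorted_wrt_rev sorted_wrt_map
    by (rule sorted_wrt_mono_rel[rotated]) (metis noncrossing_edges_swap noncrossing_edges_commute)
  with assms show ?thesis
    by (auto simp: noncrossing_ham_path_def hamiltonian_path_def noncrossing_path_iff_edges
        hd_rev last_rev)
qed

lemma noncrossing_ham_path_append:
  assumes p: "noncrossing_ham_path X s a p" and q: "noncrossing_ham_path Y b t q"
    and "X \<inter> Y = {}"
    and "\<And>e. e \<in> set (edges p) \<Longrightarrow> noncrossing_edges e (a, b)"
    and "\<And>f. f \<in> set (edges q) \<Longrightarrow> noncrossing_edges (a, b) f"
    and "\<And>e f. e \<in> set (edges p) \<Longrightarrow> f \<in> set (edges q) \<Longrightarrow> noncrossing_edges e f"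
  shows "noncrossing_ham_path (X \<union> Y) s t (p @ q)"
proof -
  have "p \<noteq> []" "q \<noteq> []" "last p = a" "hd q = b"
    using p q by (simp_all add: noncrossing_ham_path_def)
  then have "edges (p @ q) = edges p @ (a, b) # edges q"
    by (simp add: edges_append)
  with assms show ?thesis
    by (auto simp: noncrossing_ham_path_def hamiltonian_path_def noncrossing_path_iff_edges
        sorted_wrt_append)
qed

lemma noncrossing_ham_path_edge_vertices:
  assumes "noncrossing_ham_path X s t ps" "(c, d) \<in> set (edges ps)"
  shows "c \<in> X" "d \<in> X" "c \<noteq> d"
  using assms edges_distinct_vertices[OF assms(2)]
  by (auto simp: noncrossing_ham_path_def hamiltonian_path_def)

lemma noncrossing_ham_path_snoc_hull_edge:
  assumes p: "noncrossing_ham_path (X - {t}) s u p" and tu: "hull_edge X t u"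
  shows "noncrossing_ham_path X s t (p @ [t])"
proof -
  have "noncrossing_edges e (u, t)" if e: "e \<in> set (edges p)" for e
  proof -
    obtain c d where cd: "e = (c, d)"
      by fastforce
    have "c \<in> X - {t}" "d \<in> X - {t}" "c \<noteq> d"
      using noncrossing_ham_path_edge_vertices[OF p e[unfolded cd]] by auto
    then have "noncrossing_edges (t, u) (c, d)"
      by (intro hull_edge_noncrossing[OF tu]) auto
    then show ?thesis
      unfolding cd by (metis noncrossing_edges_commute noncrossing_edges_swap swap_simp)
  qed
  then have "noncrossing_ham_path (X - {t} \<union> {t}) s t (p @ [t])"
    by (intro noncrossing_ham_path_append[OF p noncrossing_ham_path_single]) auto
  moreover have "t \<in> X"
    using tu by (simp add: hull_edge_def)
  ultimately show ?thesis
    by (simp add: insert_absorb)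
qed

lemma noncrossing_ham_path_join_across:
  assumes X: "general_position X" "s \<in> X" "t \<in> X" "s \<noteq> t"
    and p: "noncrossing_ham_path (X \<inter> left_side s t) s a p"
    and q: "noncrossing_ham_path (X \<inter> left_side t s) b t q"
    and ba: "hull_edge X b a"
  shows "noncrossing_ham_path X s t (p @ q)"
proof -
  let ?L = "X \<inter> left_side s t" and ?R = "X \<inter> left_side t s"
  have disjoint: "?L \<inter> ?R = {}"
    using left_side_disjoint[OF X(4)] by blast
  have "a \<in> ?L" "b \<in> ?R"
    using p q
    by (auto simp: noncrossing_ham_path_def hamiltonian_path_def dest: last_in_set hd_in_set)
  have p_edge: "fst e \<in> ?L" "snd e \<in> ?L" "fst e \<noteq> snd e" if "e \<in> set (edges p)" for e
    using noncrossing_ham_path_edge_vertices[OF p, of "fst e" "snd e"] that by auto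
  have q_edge: "fst f \<in> ?R" "snd f \<in> ?R" "fst f \<noteq> snd f" if "f \<in> set (edges q)" for f
    using noncrossing_ham_path_edge_vertices[OF q, of "fst f" "snd f"] that by auto
  have ab: "noncrossing_edges (a, b) e"
    if "fst e \<in> X" "snd e \<in> X" "fst e \<noteq> snd e" "b \<notin> {fst e, snd e} \<or> a \<notin> {fst e, snd e}" for e
  proof -
    have "noncrossing_edges (b, a) (fst e, snd e)"
      using that by (intro hull_edge_noncrossing[OF ba]) auto
    then show ?thesis
      by (metis noncrossing_edges_swap prod.collapse swap_simp)
  qed
  have "b \<notin> ?L" "a \<notin> ?R"
    using \<open>a \<in> ?L\<close> \<open>b \<in> ?R\<close> disjoint by blast+
  then have ab_p: "noncrossing_edges e (a, b)" if "e \<in> set (edges p)" for e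
    using ab[of e] p_edge[OF that] by (auto simp: noncrossing_edges_commute)
  have ab_q: "noncrossing_edges (a, b) f" if "f \<in> set (edges q)" for f
    using ab[of f] q_edge[OF that] \<open>a \<notin> ?R\<close> by auto
  have pq: "noncrossing_edges e f" if "e \<in> set (edges p)" "f \<in> set (edges q)" for e f
  proof -
    have "closed_segment (fst e) (snd e) \<subseteq> left_side s t"
      using p_edge[OF that(1)] by (intro closed_segment_subset_left_side) auto
    moreover have "closed_segment (fst f) (snd f) \<subseteq> left_side t s"
      using q_edge[OF that(2)] by (intro closed_segment_subset_left_side) auto
    ultimately show ?thesis
      using left_side_disjoint[OF X(4)] by (auto simp: noncrossing_edges_def)
  qed
  have "noncrossing_ham_path (?L \<union> ?R) s t (p @ q)"
    using noncrossing_ham_path_append[OF p q disjoint ab_p ab_q pq] .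
  then show ?thesis
    unfolding general_position_left_sides[OF X] .
qed

section \<open>Finding a hull edge\<close>

text \<open>Coordinates along the line st (with s at 0 and t at |t - s|^2) and across it (orient s t);
  crossing s t a b is the coordinate along st of the point where the line ab meets it.\<close>

definition along :: "real^2 \<Rightarrow> real^2 \<Rightarrow> real^2 \<Rightarrow> real" where
  "along s t q = (t - s) \<bullet> (q - s)"

definition crossing :: "real^2 \<Rightarrow> real^2 \<Rightarrow> real^2 \<Rightarrow> real^2 \<Rightarrow> real" where
  "crossing s t a b =
     (along s t a * orient s t b - along s t b * orient s t a) / (orient s t b - orient s t a)"

lemma along_self [simp]: "along s t s = 0"
  by (simp add: along_def)

lemma along_pos: "s \<noteq> t \<Longrightarrow> 0 < along s t t"
  by (simp add: along_def)

lemma crossing_on_line: "orient s t q = 0 \<Longrightarrow> orient s t a \<noteq> 0 \<Longrightarrow> crossing s t a q = along s t q"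
  by (simp add: crossing_def field_simps)

lemma orient_in_frame:
  "orient a b q * along s t t =
     (along s t b - along s t a) * (orient s t q - orient s t a)
     - (orient s t b - orient s t a) * (along s t q - along s t a)"
  by (simp add: orient_def along_def inner_vec_def sum_2 algebra_simps)

lemma orient_nonneg_below_crossing:
  assumes "s \<noteq> t" "0 < orient s t a" "orient s t b \<le> 0" "orient s t q \<le> 0"
    and "crossing s t a q \<le> crossing s t a b"
  shows "0 \<le> orient b a q"
proof -
  define xa xb xq ya yb yq
    where xa_def: "xa = along s t a" and xb_def: "xb = along s t b"
      and xq_def: "xq = along s t q" and ya_def: "ya = orient s t a"
      and yb_def: "yb = orient s t b" and yq_def: "yq = orient s t q"
  define M where "M = crossing s t a b"
  have ya: "0 < ya" and yb: "yb \<le> 0" and yq: "yq \<le> 0"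
    using assms(2-4) by (simp_all add: ya_def yb_def yq_def)
  have M: "M * (yb - ya) = xa * yb - xb * ya"
    using ya yb by (simp add: M_def crossing_def xa_def xb_def ya_def yb_def)
  have "M * (yq - ya) \<le> xa * yq - xq * ya"
    using assms(5) ya yq
    by (simp add: M_def crossing_def xa_def xq_def ya_def yq_def neg_divide_le_eq)
  then have "0 \<le> (ya - yb) * (xa * yq - xq * ya - M * (yq - ya))"
    using ya yb by simp
  also have "\<dots> = ((xa - xb) * (yq - yb) - (ya - yb) * (xq - xb)) * ya"
    using M by algebra
  finally have "0 \<le> (xa - xb) * (yq - yb) - (ya - yb) * (xq - xb)"
    using ya by (simp add: zero_le_mult_iff)
  then have "0 \<le> orient b a q * along s t t"
    using orient_in_frame[of b a q s t] by (simp add: xa_def xb_def xq_def ya_def yb_def yq_def)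
  then show ?thesis
    using along_pos[OF assms(1)] by (simp add: zero_le_mult_iff)
qed

lemma orient_nonneg_above_crossing:
  assumes "s \<noteq> t" "0 < orient s t a" "orient s t b < 0" "0 \<le> orient s t q"
    and "crossing s t q b \<le> crossing s t a b"
  shows "0 \<le> orient b a q"
proof -
  define xa xb xq ya yb yq
    where xa_def: "xa = along s t a" and xb_def: "xb = along s t b"
      and xq_def: "xq = along s t q" and ya_def: "ya = orient s t a"
      and yb_def: "yb = orient s t b" and yq_def: "yq = orient s t q"
  define M where "M = crossing s t a b"
  have ya: "0 < ya" and yb: "yb < 0" and yq: "0 \<le> yq"
    using assms(2-4) by (simp_all add: ya_def yb_def yq_def)
  have M: "M * (yb - ya) = xa * yb - xb * ya"
    using ya yb by (simp add: M_def crossing_def xa_def xb_def ya_def yb_def)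
  have "M * (yb - yq) \<le> xq * yb - xb * yq"
    using assms(5) yb yq
    by (simp add: M_def crossing_def xb_def xq_def yb_def yq_def neg_divide_le_eq)
  then have "0 \<le> (ya - yb) * (xq * yb - xb * yq - M * (yb - yq))"
    using ya yb by simp
  also have "\<dots> = ((xa - xb) * (yq - yb) - (ya - yb) * (xq - xb)) * - yb"
    using M by algebra
  finally have "0 \<le> (xa - xb) * (yq - yb) - (ya - yb) * (xq - xb)"
    using yb by (simp add: mult_le_0_iff)
  then have "0 \<le> orient b a q * along s t t"
    using orient_in_frame[of b a q s t]
    by (simp add: xa_def xb_def xq_def ya_def yb_def yq_def)
  then show ?thesis
    using along_pos[OF assms(1)] by (simp add: zero_le_mult_iff)
qed

lemma orient_nonneg_above_slope:
  assumes "s \<noteq> t" "0 < orient s t u" "0 < orient s t q"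
    and "(along s t q - along s t t) / orient s t q \<le> (along s t u - along s t t) / orient s t u"
  shows "0 \<le> orient t u q"
proof -
  have "(along s t q - along s t t) * orient s t u \<le> (along s t u - along s t t) * orient s t q"
    using assms(2-4) by (simp add: field_simps)
  then have "0 \<le> orient t u q * along s t t"
    using orient_in_frame[of t u q s t] by (simp add: algebra_simps)
  then show ?thesis
    using along_pos[OF assms(1)] by (simp add: zero_le_mult_iff)
qed

lemma finite_obtains_max:
  fixes f :: "'a \<Rightarrow> 'b::linorder"
  assumes "finite S" "S \<noteq> {}"
  obtains x where "x \<in> S" "\<And>y. y \<in> S \<Longrightarrow> f y \<le> f x"
proof -
  have "Max (f ` S) \<in> f ` S"
    using assms by simp
  then obtain x where "x \<in> S" "f x = Max (f ` S)"
    by auto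
  with assms show thesis
    by (intro that[of x]) auto
qed

lemma crossing_le_at_line_point:
  assumes "general_position X" "s \<in> X" "t \<in> X" "s \<noteq> t" "q \<in> X" "orient s t q = 0" "orient s t a \<noteq> 0"
  shows "crossing s t a q \<le> along s t t"
proof -
  have "q = s \<or> q = t"
    using general_position_orient_eq_0[OF assms(1-3,5,4,6)] .
  with assms(4,6,7) show ?thesis
    by (auto simp: crossing_on_line less_imp_le[OF along_pos])
qed

lemma hull_edge_crossing_beyond:
  assumes X: "finite X" "general_position X" "s \<in> X" "t \<in> X" "s \<noteq> t"
    and far: "a0 \<in> X" "b0 \<in> X" "0 < orient s t a0" "orient s t b0 < 0"
      "along s t t < crossing s t a0 b0"
  shows "\<exists>a b. 0 < orient s t a \<and> orient s t b < 0 \<and> hull_edge X b a"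
proof -
  let ?P = "{(a, b). a \<in> X \<and> b \<in> X \<and> 0 < orient s t a \<and> orient s t b < 0}"
  have "finite ?P"
    by (rule finite_subset[of _ "X \<times> X"]) (use X(1) in auto)
  moreover have far_pair: "(a0, b0) \<in> ?P"
    using far by simp
  ultimately obtain p where p: "p \<in> ?P"
    and p_max: "\<And>p'. p' \<in> ?P \<Longrightarrow> case_prod (crossing s t) p' \<le> case_prod (crossing s t) p"
    using finite_obtains_max[of ?P "case_prod (crossing s t)"] by blast
  obtain a b where [simp]: "p = (a, b)"
    by (cases p)
  have ab: "a \<in> X" "b \<in> X" "0 < orient s t a" "orient s t b < 0"
    using p by simp_all
  have max: "crossing s t a' b' \<le> crossing s t a b" if "(a', b') \<in> ?P" for a' b'
    using p_max[OF that] by simp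
  have beyond: "along s t t < crossing s t a b"
    using far(5) max[OF far_pair] by (rule less_le_trans)
  have "0 \<le> orient b a q" if "q \<in> X" for q
  proof (cases "0 < orient s t q")
    case True
    with ab that have "crossing s t q b \<le> crossing s t a b"
      by (intro max) simp
    with orient_nonneg_above_crossing[OF X(5) ab(3,4)] True show ?thesis
      by simp
  next
    case False
    have "crossing s t a q \<le> crossing s t a b"
    proof (cases "orient s t q = 0")
      case True
      with ab(3) have "crossing s t a q \<le> along s t t"
        by (intro crossing_le_at_line_point[OF X(2-5) that]) simp_all
      with beyond show ?thesis
        by linarith
    next
      case False
      with \<open>\<not> 0 < orient s t q\<close> ab that show ?thesis
        by (intro max) simp
    qed
    with False ab show ?thesis
      by (intro orient_nonneg_below_crossing[OF X(5)]) simp_all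
  qed
  moreover have "b \<noteq> a"
    using ab by auto
  ultimately have "hull_edge X b a"
    using ab by (intro hull_edgeI[OF X(2)]) simp_all
  with ab show ?thesis
    by blast
qed

lemma hull_edge_at_endpoint:
  assumes X: "finite X" "general_position X" "s \<in> X" "t \<in> X" "s \<noteq> t"
    and above: "u0 \<in> X" "0 < orient s t u0"
    and no_far: "\<And>a b. a \<in> X \<Longrightarrow> b \<in> X \<Longrightarrow> 0 < orient s t a \<Longrightarrow> orient s t b < 0 \<Longrightarrow>
      crossing s t a b \<le> along s t t"
  shows "\<exists>u. 0 < orient s t u \<and> hull_edge X t u"
proof -
  let ?U = "{q \<in> X. 0 < orient s t q}"
  \<comment> \<open>the cotangent of the angle between the ray beyond t and the direction from t to q\<close>
  let ?slope = "\<lambda>q. (along s t q - along s t t) / orient s t q"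
  obtain u where u: "u \<in> X" "0 < orient s t u" and max: "\<And>q. q \<in> ?U \<Longrightarrow> ?slope q \<le> ?slope u"
    using finite_obtains_max[of ?U ?slope] X(1) above by auto
  have "0 \<le> orient t u q" if "q \<in> X" for q
  proof (cases "0 < orient s t q")
    case True
    then show ?thesis
      using u max that by (intro orient_nonneg_above_slope[OF X(5)]) auto
  next
    case False
    have "crossing s t u q \<le> along s t t"
    proof (cases "orient s t q = 0")
      case True
      then show ?thesis
        using crossing_le_at_line_point[OF X(2-5) that True] u(2) by simp
    next
      case False
      with \<open>\<not> 0 < orient s t q\<close> show ?thesis
        using no_far u that by simp
    qed
    moreover have "crossing s t u t = along s t t"
      using u(2) by (simp add: crossing_on_line)
    ultimately show ?thesis
      using False u(2) by (intro orient_nonneg_below_crossing[OF X(5)]) auto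
  qed
  moreover have "u \<noteq> t"
    using u(2) by auto
  ultimately have "hull_edge X t u"
    using u X by (intro hull_edgeI) auto
  with u show ?thesis
    by blast
qed

lemma noncrossing_ham_path_from_smaller:
  assumes X: "finite X" "general_position X" "s \<in> X" "t \<in> X" "s \<noteq> t"
    and above: "u0 \<in> X" "0 < orient s t u0"
    and smaller: "\<And>Y a b. Y \<subset> X \<Longrightarrow> a \<in> Y \<Longrightarrow> b \<in> Y \<Longrightarrow> a \<noteq> b \<Longrightarrow>
      \<exists>ps. noncrossing_ham_path Y a b ps"
  shows "\<exists>ps. noncrossing_ham_path X s t ps"
proof (cases "\<exists>a\<in>X. \<exists>b\<in>X. 0 < orient s t a \<and> orient s t b < 0 \<and> along s t t < crossing s t a b")
  case True
  then obtain a b where ab: "0 < orient s t a" "orient s t b < 0" "hull_edge X b a"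
    using hull_edge_crossing_beyond[OF X] by blast
  then have "a \<in> X \<inter> left_side s t" "b \<in> X \<inter> left_side t s"
    by (auto simp: hull_edge_def left_side_def orient_commute[of t s])
  moreover have "t \<notin> left_side s t" "s \<notin> left_side t s"
    using X(5) by (auto simp: left_side_def orient_commute[of t s])
  ultimately obtain p q where "noncrossing_ham_path (X \<inter> left_side s t) s a p"
    and "noncrossing_ham_path (X \<inter> left_side t s) b t q"
    using smaller[of "X \<inter> left_side s t" s a] smaller[of "X \<inter> left_side t s" b t] X ab
    by (fastforce simp: left_side_def)
  with X(2-5) ab(3) show ?thesis
    by (blast intro: noncrossing_ham_path_join_across)
next
  case False
  then obtain u where "0 < orient s t u" "hull_edge X t u"
    using hull_edge_at_endpoint[OF X above] by force
  moreover from this have "u \<in> X - {t}" "u \<noteq> s"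
    by (auto simp: hull_edge_def)
  ultimately obtain p where "noncrossing_ham_path (X - {t}) s u p"
    using smaller[of "X - {t}" s u] X by blast
  with \<open>hull_edge X t u\<close> show ?thesis
    by (blast intro: noncrossing_ham_path_snoc_hull_edge)
qed

lemma noncrossing_ham_path_exists:
  assumes "finite X" "general_position X" "s \<in> X" "t \<in> X" "s \<noteq> t"
  shows "\<exists>ps. noncrossing_ham_path X s t ps"
  using assms
proof (induction X arbitrary: s t rule: finite_psubset_induct)
  case (psubset X)
  have smaller: "\<exists>ps. noncrossing_ham_path Y a b ps"
    if "Y \<subset> X" "a \<in> Y" "b \<in> Y" "a \<noteq> b" for Y a b
    using psubset.IH[OF that(1) _ that(2-4)] general_position_subset[OF psubset.prems(1)] that(1)
    by blast
  show ?case
  proof (cases "X = {s, t}")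
    case True
    with psubset.prems(4) show ?thesis
      using noncrossing_ham_path_two by blast
  next
    case False
    then obtain q where q: "q \<in> X" "q \<noteq> s" "q \<noteq> t"
      using psubset.prems(2,3) by blast
    then have "orient s t q \<noteq> 0"
      using general_position_orient_eq_0[OF psubset.prems(1-3) q(1) psubset.prems(4)] by blast
    then consider "0 < orient s t q" | "0 < orient t s q"
      by (fastforce simp: orient_commute[of t s])
    then show ?thesis
    proof cases
      case 1
      with psubset q show ?thesis
        using noncrossing_ham_path_from_smaller smaller by blast
    next
      case 2
      with psubset q obtain ps where "noncrossing_ham_path X t s ps"
        using noncrossing_ham_path_from_smaller[of X t s q] smaller by metis
      then show ?thesis
        using noncrossing_ham_path_rev by blast
    qed
  qed
qed

theorem lemma2:
  fixes X :: "(real^2) set" and s t :: "real^2"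
  assumes "finite X"
    and "\<forall>a\<in>X. \<forall>b\<in>X. \<forall>c\<in>X. a \<noteq> b \<and> a \<noteq> c \<and> b \<noteq> c \<longrightarrow> \<not> collinear {a, b, c}"
    and "s \<in> X" and "t \<in> X" and "s \<noteq> t"
  shows "\<exists>ps. hamiltonian_path X ps \<and> noncrossing_path ps \<and> hd ps = s \<and> last ps = t"
proof -
  have "general_position X"
    using assms(2) unfolding general_position_def .
  then show ?thesis
    using noncrossing_ham_path_exists[OF assms(1) _ assms(3-5)]
    unfolding noncrossing_ham_path_def by blast
qed

end
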